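(* Let $x,y>0$, $z\ge 0$, $p>0$ (the approximations are intended for the regime $z,p\ll x,y$). Let $a=(x+y)/2$, $g=\sqrt{xy}$, $b=\sqrt{3p(p+2z)}/2$, $d=(z+2p)/3$. Then $$R_J(x,y,z,p)=\frac3g R_C(z,p)-\frac{3\theta}{g-p}\left[R_C(z,g)-\frac pg R_C(z,p)\right],$$ where $1\le\theta\le a/g$ with equalities iff $x=y$; in the complete case $z=0$ this reduces to $$R_J(x,y,0,p)=\frac{3\pi}{2\sqrt{xyp}}\left(1-\frac{\theta\sqrt p}{\sqrt g+\sqrt p}\right)$$ with $\theta$ as before. Moreover, $$R_J(x,y,z,p)=\frac3g R_C(z,p)-\frac{6}{xy}R_G(x,y,0)+\frac{3\pi\theta'}{2xy},\quad \frac{\sqrt b}{1+\sqrt{b/g}}<\theta'<\frac{3a}{2g}\,\frac{\sqrt d}{1+\sqrt{d/g}}.$$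
   Context: For $x,y,z\ge 0$ with at most one zero and $p>0$: $R_J(x,y,z,p)=\frac32\int_0^\infty[(t+x)(t+y)(t+z)]^{-1/2}(t+p)^{-1}\,dt$; $R_G(x,y,z)=\frac14\int_0^\infty[(t+x)(t+y)(t+z)]^{-1/2}\left(\frac{x}{t+x}+\frac{y}{t+y}+\frac{z}{t+z}\right)t\,dt$. For $x\ge0$, $y>0$: $R_C(x,y)=\frac12\int_0^\infty(t+x)^{-1/2}(t+y)^{-1}\,dt$. *)

theory Defs
  imports "HOL-Analysis.Analysis"
begin

text \<open>Carlson symmetric elliptic integrals, as improper integrals over [0,\<infinity>)
  (Henstock-Kurzweil integral over {0..}; the integrands are nonnegative).\<close>

definition R_C :: "real \<Rightarrow> real \<Rightarrow> real" where
  "R_C x y = 1/2 * integral {0..} (\<lambda>t. 1 / (sqrt (t + x) * (t + y)))"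

definition R_J :: "real \<Rightarrow> real \<Rightarrow> real \<Rightarrow> real \<Rightarrow> real" where
  "R_J x y z p = 3/2 * integral {0..}
     (\<lambda>t. 1 / (sqrt ((t + x) * (t + y) * (t + z)) * (t + p)))"

definition R_G :: "real \<Rightarrow> real \<Rightarrow> real \<Rightarrow> real" where
  "R_G x y z = 1/4 * integral {0..}
     (\<lambda>t. (x / (t + x) + y / (t + y) + z / (t + z)) * t / sqrt ((t + x) * (t + y) * (t + z)))"

end

theory Submission
  imports Defs "HOL-Real_Asymp.Real_Asymp"
begin

(* With h(t) = 1 / (sqrt (t + z) * (t + p)), the integrand of 2 R_C(z, p), and the defect
   k(t) = 1/g - 1 / sqrt ((t + x) * (t + y)), one has R_J = 3/2 * integral of h * (1/g - k).
   Since (t + x) * (t + y) = t^2 + 2 a t + g^2 with g <= a, the defect is squeezed between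
   k0(t) = 1/g - 1/(t + g), its value for x = y, and (a/g) k0, strictly unless x = y.  Hence the
   integral of h k is theta times that of h k0 with 1 <= theta <= a/g, and the latter is elementary:
   partial fractions give R_C(z, g) and R_C(z, p), and for z = 0 an arctan integral.
   Integration by parts gives R_G(x, y, 0) = (x y / 4) * integral of k(t) / t^(3/2), so
   theta' = (x y / pi) * integral of (t^(-3/2) - h) k.  The same squeeze replaces k by k0, and
   pointwise bounds on 1 / sqrt t - t h(t) in terms of b and d compare the result with explicit
   arctan integrals. *)

section \<open>Integrals over the half-line\<close>

lemma has_integral_Ioi_interval_integral:
  fixes f :: "real \<Rightarrow> real"
  assumes "set_integrable lborel (einterval 0 \<infinity>) f"
  shows "(f has_integral (LBINT t=0..\<infinity>. f t)) {0<..}"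
proof -
  have S: "einterval 0 \<infinity> = {0<..}"
    by (auto simp: einterval_def zero_ereal_def)
  have "set_integrable lborel {0<..} f" "(LBINT t=0..\<infinity>. f t) = (LINT t:{0<..}|lborel. f t)"
    using assms by (simp_all add: S zero_ereal_def interval_integral_to_infinity_eq greaterThan_def)
  then show ?thesis
    using set_borel_integral_eq_integral by (metis has_integral_integrable_integral)
qed

lemma has_integral_Ioi_FTC_nonneg:
  fixes f F :: "real \<Rightarrow> real"
  assumes "\<And>t. 0 < t \<Longrightarrow> (F has_real_derivative f t) (at t)"
    and "\<And>t. 0 < t \<Longrightarrow> isCont f t"
    and "\<And>t. 0 < t \<Longrightarrow> 0 \<le> f t"
    and "(F \<longlongrightarrow> A) (at_right 0)" and "(F \<longlongrightarrow> B) at_top"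
  shows "(f has_integral (B - A)) {0<..}"
proof -
  have "set_integrable lborel (einterval 0 \<infinity>) f \<and> (LBINT t=0..\<infinity>. f t) = B - A"
    by (intro conjI interval_integral_FTC_nonneg[where F = F])
      (use assms in \<open>auto simp: zero_ereal_def ereal_tendsto_simps1\<close>)
  then show ?thesis
    using has_integral_Ioi_interval_integral by metis
qed

lemma has_integral_Ioi_FTC:
  fixes f F :: "real \<Rightarrow> real"
  assumes "\<And>t. 0 < t \<Longrightarrow> (F has_real_derivative f t) (at t)"
    and f_cont: "continuous_on {0<..} f"
    and f_int: "f absolutely_integrable_on {0<..}"
    and "(F \<longlongrightarrow> A) (at_right 0)" and "(F \<longlongrightarrow> B) at_top"
  shows "(f has_integral (B - A)) {0<..}"
proof -
  have S: "einterval 0 \<infinity> = {0<..}"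
    by (auto simp: einterval_def zero_ereal_def)
  have "(\<lambda>t. indicator {0<..} t *\<^sub>R f t) \<in> borel_measurable borel"
    using f_cont by (intro borel_measurable_continuous_on_indicator) auto
  then have "set_integrable lborel (einterval 0 \<infinity>) f"
    using f_int by (simp add: S set_integrable_def integrable_completion)
  moreover from this have "(LBINT t=0..\<infinity>. f t) = B - A"
    by (intro interval_integral_FTC_integrable[where F = F])
      (use assms in \<open>auto simp: zero_ereal_def ereal_tendsto_simps1
        has_real_derivative_iff_has_vector_derivative[symmetric] continuous_on_eq_continuous_at\<close>)
  ultimately show ?thesis
    using has_integral_Ioi_interval_integral by metis
qed

lemma absolutely_integrable_on_dominated:
  fixes f g :: "'a::euclidean_space \<Rightarrow> real"
  assumes "S \<in> sets lebesgue" "continuous_on S f" "g integrable_on S"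
    and "\<And>t. t \<in> S \<Longrightarrow> \<bar>f t\<bar> \<le> g t"
  shows "f absolutely_integrable_on S"
  using assms by (intro measurable_bounded_by_integrable_imp_absolutely_integrable[where g = g]
      continuous_imp_measurable_on_sets_lebesgue) auto

lemma integral_strict_mono_open:
  fixes f g :: "real \<Rightarrow> real"
  assumes S: "open S" "S \<noteq> {}"
    and int: "f integrable_on S" "g integrable_on S"
    and cont: "continuous_on S f" "continuous_on S g"
    and less: "\<And>t. t \<in> S \<Longrightarrow> f t < g t"
  shows "integral S f < integral S g"
proof -
  obtain c e where "e > 0" "cball c e \<subseteq> S"
    using S open_contains_cball by blast
  then have sub: "{c - e..c + e} \<subseteq> S" and nonempty: "{c - e<..<c + e} \<noteq> {}"
    by (auto simp: cball_eq_atLeastAtMost)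
  let ?D = "\<lambda>t. g t - f t"
  have cont_D: "continuous_on S ?D"
    using cont by (intro continuous_intros)
  have "integral {c - e..c + e} (\<lambda>t. 0) < integral {c - e..c + e} ?D"
    using less sub nonempty
    by (intro integral_less_real continuous_on_subset[OF cont_D sub]) (auto intro!: less subsetD[OF sub])
  also have "\<dots> \<le> integral S ?D"
    using less sub int cont_D
    by (intro integral_subset_le integrable_continuous_interval continuous_on_subset[OF cont_D sub]
        integrable_diff) (auto intro: less_imp_le)
  also have "\<dots> = integral S g - integral S f"
    using int by (rule integral_diff[rotated])
  finally show ?thesis
    by simp
qed

lemma integral_atLeast_eq_greaterThan:
  fixes f :: "real \<Rightarrow> 'b::banach"
  shows "integral {c..} f = integral {c<..} f"
  by (rule integral_spike_set) (auto intro: negligible_subset[of "{c}"])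

section \<open>Elementary integrals\<close>

lemma has_integral_inverse_sqrt_mult_shift:
  fixes c :: real
  assumes c: "c > 0"
  shows "((\<lambda>t. 1 / (sqrt t * (t + c))) has_integral pi / sqrt c) {0<..}"
proof -
  define F where "F t = 2 / sqrt c * arctan (sqrt t / sqrt c)" for t
  have "((\<lambda>t. 1 / (sqrt t * (t + c))) has_integral (pi / sqrt c - 0)) {0<..}"
  proof (rule has_integral_Ioi_FTC_nonneg[where F = F])
    fix t :: real assume t: "0 < t"
    show "(F has_real_derivative 1 / (sqrt t * (t + c))) (at t)"
      unfolding F_def
      by (insert t c, (rule derivative_eq_intros refl | simp)+) (simp add: divide_simps real_sqrt_divide)
    show "isCont (\<lambda>t. 1 / (sqrt t * (t + c))) t" "0 \<le> 1 / (sqrt t * (t + c))"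
      using t c by (auto intro!: continuous_intros)
  next
    show "(F \<longlongrightarrow> 0) (at_right 0)"
      unfolding F_def using c by real_asymp
    have "(F \<longlongrightarrow> pi / root 2 c) at_top"
      unfolding F_def using c by real_asymp
    then show "(F \<longlongrightarrow> pi / sqrt c) at_top"
      by (simp only: sqrt_def)
  qed
  then show ?thesis
    by simp
qed

lemma has_integral_sqrt_div_shift_square:
  fixes p :: real
  assumes p: "p > 0"
  shows "((\<lambda>t. sqrt t / ((t + p) * (t + p))) has_integral pi / (2 * sqrt p)) {0<..}"
proof -
  define F where "F t = arctan (sqrt t / sqrt p) / sqrt p - sqrt t / (t + p)" for t
  have "((\<lambda>t. sqrt t / ((t + p) * (t + p))) has_integral (pi / (2 * sqrt p) - 0)) {0<..}"
  proof (rule has_integral_Ioi_FTC_nonneg[where F = F])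
    fix t :: real assume t: "0 < t"
    show "(F has_real_derivative sqrt t / ((t + p) * (t + p))) (at t)"
    proof -
      have sq: "sqrt t * sqrt t = t"
        using t by simp
      show ?thesis
        unfolding F_def
        by (insert t p sq, (rule derivative_eq_intros refl | simp)+) (simp add: divide_simps real_sqrt_divide, algebra)
    qed
    show "isCont (\<lambda>t. sqrt t / ((t + p) * (t + p))) t" "0 \<le> sqrt t / ((t + p) * (t + p))"
      using t p by (auto intro!: continuous_intros)
  next
    show "(F \<longlongrightarrow> 0) (at_right 0)"
      unfolding F_def using p by real_asymp
    have "(F \<longlongrightarrow> pi * inverse (root 2 p) / 2) at_top"
      unfolding F_def using p by real_asymp
    then show "(F \<longlongrightarrow> pi / (2 * sqrt p)) at_top"
      by (simp add: sqrt_def field_simps)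
  qed
  then show ?thesis
    by simp
qed

lemma has_integral_sqrt_div_shift_mult:
  fixes p q :: real
  assumes p: "p > 0" and q: "q > 0"
  shows "((\<lambda>t. sqrt t / ((t + p) * (t + q))) has_integral pi / (sqrt p + sqrt q)) {0<..}"
proof (cases "p = q")
  case True
  then show ?thesis
    using has_integral_sqrt_div_shift_square[OF p] by simp
next
  case False
  have int: "((\<lambda>t. q / (q - p) * (1 / (sqrt t * (t + q))) - p / (q - p) * (1 / (sqrt t * (t + p))))
      has_integral q / (q - p) * (pi / sqrt q) - p / (q - p) * (pi / sqrt p)) {0<..}"
    by (intro has_integral_diff has_integral_mult_right has_integral_inverse_sqrt_mult_shift p q)
  have "q / (q - p) * (pi / sqrt q) - p / (q - p) * (pi / sqrt p) = pi * (sqrt q - sqrt p) / (q - p)"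
    using p q False by (simp add: divide_simps) (simp add: algebra_simps)
  also have "\<dots> = pi / (sqrt p + sqrt q)"
  proof -
    have "q - p = (sqrt q - sqrt p) * (sqrt p + sqrt q)" "sqrt q - sqrt p \<noteq> 0"
      using p q False by (simp_all add: algebra_simps)
    then show ?thesis
      by simp
  qed
  finally have closed_form: "q / (q - p) * (pi / sqrt q) - p / (q - p) * (pi / sqrt p) = pi / (sqrt p + sqrt q)" .
  show ?thesis
    unfolding closed_form[symmetric]
  proof (rule has_integral_eq[OF _ int])
    fix t :: real assume "t \<in> {0<..}"
    then show "q / (q - p) * (1 / (sqrt t * (t + q))) - p / (q - p) * (1 / (sqrt t * (t + p)))
        = sqrt t / ((t + p) * (t + q))"
      using p q False by (simp add: divide_simps) (simp add: algebra_simps)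
  qed
qed

lemma has_integral_inverse_sqrt_mult_shifts:
  fixes c g :: real
  assumes c: "c > 0" and g: "g > 0"
  shows "((\<lambda>t. c / (sqrt t * (t + c) * (t + g))) has_integral pi / g * (sqrt c / (1 + sqrt (c / g)))) {0<..}"
proof -
  have int: "((\<lambda>t. 1 / (sqrt t * (t + g)) - sqrt t / ((t + c) * (t + g)))
      has_integral pi / sqrt g - pi / (sqrt c + sqrt g)) {0<..}"
    by (intro has_integral_diff has_integral_inverse_sqrt_mult_shift has_integral_sqrt_div_shift_mult c g)
  have closed_form: "pi / sqrt g - pi / (sqrt c + sqrt g) = pi / g * (sqrt c / (1 + sqrt (c / g)))"
  proof -
    have "sqrt c + sqrt g > 0" "sqrt g + sqrt c > 0"
      using c g by (simp_all add: add_pos_pos)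
    then show ?thesis
      using c g by (simp add: real_sqrt_divide divide_simps) (simp add: algebra_simps)
  qed
  show ?thesis
    unfolding closed_form[symmetric]
  proof (rule has_integral_eq[OF _ int])
    fix t :: real assume "t \<in> {0<..}"
    then show "1 / (sqrt t * (t + g)) - sqrt t / ((t + c) * (t + g)) = c / (sqrt t * (t + c) * (t + g))"
      using c g by (simp add: divide_simps)
  qed
qed

lemma R_C_has_integral:
  fixes z p :: real
  assumes z: "z \<ge> 0" and p: "p > 0"
  shows "((\<lambda>t. 1 / (sqrt (t + z) * (t + p))) has_integral 2 * R_C z p) {0<..}"
proof -
  have "(\<lambda>t. 1 / (sqrt (t + z) * (t + p))) absolutely_integrable_on {0<..}"
  proof (rule absolutely_integrable_on_dominated)
    show "continuous_on {0<..} (\<lambda>t. 1 / (sqrt (t + z) * (t + p)))"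
      using z p by (intro continuous_intros) auto
    show "(\<lambda>t. 1 / (sqrt t * (t + p))) integrable_on {0<..}"
      using has_integral_inverse_sqrt_mult_shift[OF p] by blast
    show "\<bar>1 / (sqrt (t + z) * (t + p))\<bar> \<le> 1 / (sqrt t * (t + p))" if "t \<in> {0<..}" for t
      using that z p by (auto intro!: divide_left_mono mult_right_mono mult_pos_pos)
  qed auto
  then have "((\<lambda>t. 1 / (sqrt (t + z) * (t + p)))
      has_integral integral {0<..} (\<lambda>t. 1 / (sqrt (t + z) * (t + p)))) {0<..}"
    using set_lebesgue_integral_eq_integral(1) integrable_integral by blast
  then show ?thesis
    by (simp add: R_C_def integral_atLeast_eq_greaterThan)
qed

lemma R_C_0:
  fixes p :: real
  assumes "p > 0"
  shows "R_C 0 p = pi / (2 * sqrt p)"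
proof -
  have "((\<lambda>t. 1 / (sqrt t * (t + p))) has_integral 2 * R_C 0 p) {0<..}"
    using R_C_has_integral[of 0 p] assms by simp
  from has_integral_unique[OF this has_integral_inverse_sqrt_mult_shift[OF assms]] show ?thesis
    by simp
qed

section \<open>Pointwise estimates\<close>

lemma sqrt_mult_sqrt_mult: "0 \<le> t \<Longrightarrow> sqrt t * (sqrt t * c) = t * c"
  by (simp flip: mult.assoc)

lemma sqrt_shift_mult_ge:
  fixes x y t :: real
  assumes x: "x > 0" and y: "y > 0" and t: "t \<ge> 0"
  shows "t + sqrt (x * y) \<le> sqrt ((t + x) * (t + y))"
    and "x \<noteq> y \<Longrightarrow> t > 0 \<Longrightarrow> t + sqrt (x * y) < sqrt ((t + x) * (t + y))"
proof -
  have expand: "(t + x) * (t + y) - (t + sqrt (x * y))\<^sup>2 = t * (sqrt x - sqrt y)\<^sup>2"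
    using x y by (simp add: power2_eq_square algebra_simps real_sqrt_mult)
  moreover have "0 \<le> t * (sqrt x - sqrt y)\<^sup>2"
    using t by simp
  ultimately show "t + sqrt (x * y) \<le> sqrt ((t + x) * (t + y))"
    by (intro real_le_rsqrt) linarith
  assume "x \<noteq> y" "t > 0"
  then have "0 < t * (sqrt x - sqrt y)\<^sup>2"
    using x y by simp
  then show "t + sqrt (x * y) < sqrt ((t + x) * (t + y))"
    using expand by (intro real_less_rsqrt) linarith
qed

lemma arith_geo_mean_cube:
  fixes u v :: real
  assumes "u \<ge> 0" "v \<ge> 0"
  shows "27 * (v * u\<^sup>2) \<le> (v + 2 * u) ^ 3"
proof -
  have "(v + 2 * u) ^ 3 - 27 * (v * u\<^sup>2) = (v - u)\<^sup>2 * (v + 8 * u)"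
    by (simp add: power2_eq_square power3_eq_cube algebra_simps)
  moreover have "(v - u)\<^sup>2 * (v + 8 * u) \<ge> 0"
    using assms by simp
  ultimately show ?thesis
    by linarith
qed

lemma sqrt_shift_estimate_b:
  fixes t z p :: real
  assumes t: "0 < t" and z: "0 \<le> z" and p: "0 < p"
  defines "b \<equiv> sqrt (3 * p * (p + 2 * z)) / 2"
  shows "sqrt t * (t + b) < sqrt (t + z) * (t + p)"
proof -
  have b_sq: "b\<^sup>2 = 3 * p * (p + 2 * z) / 4"
    using p z by (simp add: b_def power_divide)
  have "(2 * b)\<^sup>2 = 3 * p * (p + 2 * z)"
    using b_sq by (simp add: power_mult_distrib)
  also have "\<dots> \<le> (z + 2 * p)\<^sup>2"
  proof -
    have "(z + 2 * p)\<^sup>2 - 3 * p * (p + 2 * z) = (z - p)\<^sup>2"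
      by (simp add: power2_eq_square algebra_simps)
    then show ?thesis
      using zero_le_power2[of "z - p"] by linarith
  qed
  finally have b_le: "2 * b \<le> z + 2 * p"
    by (rule power2_le_imp_le) (use z p in simp)
  have "(t + z) * (t + p)\<^sup>2 - t * (t + b)\<^sup>2
      = (z + 2 * p - 2 * b) * t\<^sup>2 + (p\<^sup>2 + 2 * p * z - b\<^sup>2) * t + z * p\<^sup>2"
    by (simp add: power2_eq_square algebra_simps)
  also have "p\<^sup>2 + 2 * p * z - b\<^sup>2 = p * (p + 2 * z) / 4"
    using b_sq by (simp add: power2_eq_square algebra_simps)
  finally have "(t + z) * (t + p)\<^sup>2 - t * (t + b)\<^sup>2
      = (z + 2 * p - 2 * b) * t\<^sup>2 + p * (p + 2 * z) / 4 * t + z * p\<^sup>2" .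
  moreover have "0 \<le> (z + 2 * p - 2 * b) * t\<^sup>2" "0 < p * (p + 2 * z) / 4 * t" "0 \<le> z * p\<^sup>2"
    using b_le t z p by auto
  ultimately have "t * (t + b)\<^sup>2 < (t + z) * (t + p)\<^sup>2"
    by linarith
  then have "(sqrt t * (t + b))\<^sup>2 < (sqrt (t + z) * (t + p))\<^sup>2"
    using t z by (simp add: power_mult_distrib)
  then show ?thesis
    by (rule power_less_imp_less_base) (use t z p in \<open>simp add: add_nonneg_nonneg\<close>)
qed

lemma sqrt_shift_estimate_d:
  fixes t z p :: real
  assumes t: "0 < t" and z: "0 \<le> z" and p: "0 < p"
  defines "d \<equiv> (z + 2 * p) / 3"
  shows "(2 * t - d) * sqrt (t + z) * (t + p) < 2 * t * sqrt t * (t + d)"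
proof (cases "2 * t \<le> d")
  case True
  then have "(2 * t - d) * sqrt (t + z) * (t + p) \<le> 0"
    using t z p by (simp add: mult_nonpos_nonneg)
  also have "0 < 2 * t * sqrt t * (t + d)"
    using t z p by (simp add: d_def add_pos_nonneg)
  finally show ?thesis .
next
  case False
  have td: "0 < t + d"
    using t z p by (simp add: d_def field_simps)
  have "t + z + 2 * (t + p) = 3 * (t + d)"
    by (simp add: d_def)
  then have amgm: "(t + z) * (t + p)\<^sup>2 \<le> (t + d) ^ 3"
    using arith_geo_mean_cube[of "t + p" "t + z"] t z p by (simp only: power_mult_distrib) simp
  have "4 * t ^ 3 - (2 * t - d)\<^sup>2 * (t + d) = d\<^sup>2 * (3 * t - d)"
    by (simp add: power2_eq_square power3_eq_cube algebra_simps)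
  moreover have "d\<^sup>2 * (3 * t - d) > 0"
    using False t z p by (simp add: d_def)
  ultimately have cubic: "(2 * t - d)\<^sup>2 * (t + d) < 4 * t ^ 3"
    by linarith
  have "((2 * t - d) * sqrt (t + z) * (t + p))\<^sup>2 = (2 * t - d)\<^sup>2 * ((t + z) * (t + p)\<^sup>2)"
    using t z by (simp add: power_mult_distrib)
  also have "\<dots> \<le> (2 * t - d)\<^sup>2 * (t + d) ^ 3"
    using amgm by (rule mult_left_mono) simp
  also have "\<dots> = (2 * t - d)\<^sup>2 * (t + d) * (t + d)\<^sup>2"
    by (simp add: power2_eq_square power3_eq_cube)
  also have "\<dots> < 4 * t ^ 3 * (t + d)\<^sup>2"
    using cubic td by (intro mult_strict_right_mono) simp_all
  also have "\<dots> = (2 * t * sqrt t * (t + d))\<^sup>2"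
    using t by (simp add: power_mult_distrib power2_eq_square power3_eq_cube)
  finally show ?thesis
    by (rule power_less_imp_less_base) (use t z p in \<open>simp add: d_def\<close>)
qed

section \<open>The defect of the geometric mean\<close>

locale carlson_pair =
  fixes x y :: real
  assumes x_pos: "0 < x" and y_pos: "0 < y"
begin

definition g :: real where "g = sqrt (x * y)"

definition a :: real where "a = (x + y) / 2"

definition defect :: "real \<Rightarrow> real" where
  "defect t = 1 / g - 1 / sqrt ((t + x) * (t + y))"

text \<open>\<open>defect0\<close> is \<open>defect\<close> for the pair \<open>(g, g)\<close>, i.e. \<open>1 / g - 1 / (t + g)\<close>.\<close>
definition defect0 :: "real \<Rightarrow> real" where
  "defect0 t = t / (g * (t + g))"

lemma g_pos: "0 < g"
  using x_pos y_pos by (simp add: g_def)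

lemma g_sq: "g\<^sup>2 = x * y"
  using x_pos y_pos by (simp add: g_def)

lemma a_minus_g: "a - g = (sqrt x - sqrt y)\<^sup>2 / 2"
  using x_pos y_pos by (simp add: a_def g_def power2_eq_square real_sqrt_mult algebra_simps)

lemma g_le_a: "g \<le> a"
  using a_minus_g zero_le_power2[of "sqrt x - sqrt y"] by linarith

lemma g_less_a_iff: "g < a \<longleftrightarrow> x \<noteq> y"
proof -
  have "g < a \<longleftrightarrow> 0 < (sqrt x - sqrt y)\<^sup>2"
    using a_minus_g by linarith
  also have "\<dots> \<longleftrightarrow> x \<noteq> y"
    using x_pos y_pos by simp
  finally show ?thesis .
qed

lemma g_le_sqrt_shift: "0 \<le> t \<Longrightarrow> t + g \<le> sqrt ((t + x) * (t + y))"
  using sqrt_shift_mult_ge(1)[OF x_pos y_pos] by (simp add: g_def)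

lemma defect0_pos: "0 < t \<Longrightarrow> 0 < defect0 t"
  using g_pos by (simp add: defect0_def)

lemma defect0_le_defect:
  assumes t: "0 < t"
  shows "defect0 t \<le> defect t"
    and "x \<noteq> y \<Longrightarrow> defect0 t < defect t"
proof -
  have defect0: "defect0 t = 1 / g - 1 / (t + g)"
    using t g_pos by (simp add: defect0_def divide_simps)
  show "defect0 t \<le> defect t"
    unfolding defect0 defect_def
    using g_le_sqrt_shift t g_pos by (simp add: frac_le)
  assume "x \<noteq> y"
  then have "t + g < sqrt ((t + x) * (t + y))"
    using sqrt_shift_mult_ge(2)[OF x_pos y_pos _ _ t] t by (simp add: g_def)
  then show "defect0 t < defect t"
    unfolding defect0 defect_def
    using t g_pos by (simp add: frac_less2)
qed

lemma defect_nonneg: "0 < t \<Longrightarrow> 0 \<le> defect t"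
  using defect0_le_defect(1) defect0_pos by (meson less_imp_le order_trans)

lemma defect_gap_ge:
  assumes t: "0 < t"
  shows "t\<^sup>2 * (a - g) / (g\<^sup>2 * sqrt ((t + x) * (t + y)) * (sqrt ((t + x) * (t + y)) + g))
    \<le> a / g * defect0 t - defect t"
proof -
  define s where "s = sqrt ((t + x) * (t + y))"
  have s_ge: "t + g \<le> s"
    using g_le_sqrt_shift t by (simp add: s_def)
  have pos: "0 < g" "0 < s" "0 < t + g" "0 \<le> a"
    using g_pos t s_ge g_le_a by auto
  have "(s - g) * (s + g) = t * (t + 2 * a)"
    using t x_pos y_pos g_sq by (simp add: s_def a_def power2_eq_square algebra_simps)
  then have defect: "defect t = t * (t + 2 * a) / (g * s * (s + g))"
    unfolding defect_def s_def[symmetric] using pos by (simp add: divide_simps)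
  have "g * (t + 2 * a) * (t + g) + t * (t + g) * (a - g) = a * (t + g) * (t + 2 * g)"
    by (simp add: algebra_simps)
  also have "\<dots> \<le> a * s * (s + g)"
    using s_ge pos mult_mono[OF s_ge, of "t + 2 * g" "s + g"] by (simp add: mult.assoc mult_left_mono)
  finally have key: "t * (t + g) * (a - g) \<le> a * s * (s + g) - g * (t + 2 * a) * (t + g)"
    by simp
  have "t\<^sup>2 * (a - g) / (g\<^sup>2 * s * (s + g)) = t * (t * (t + g) * (a - g)) / (g\<^sup>2 * s * (s + g) * (t + g))"
    using pos by (simp add: power2_eq_square)
  also have "\<dots> \<le> t * (a * s * (s + g) - g * (t + 2 * a) * (t + g)) / (g\<^sup>2 * s * (s + g) * (t + g))"
    using key t pos by (intro divide_right_mono mult_left_mono) auto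
  also have "\<dots> = a / g * defect0 t - defect t"
    unfolding defect defect0_def using pos by (simp add: divide_simps) (simp add: power2_eq_square algebra_simps)
  finally show ?thesis
    by (simp add: s_def)
qed

lemma defect_le_defect0:
  assumes t: "0 < t"
  shows "defect t \<le> a / g * defect0 t"
    and "x \<noteq> y \<Longrightarrow> defect t < a / g * defect0 t"
proof -
  have "0 < g\<^sup>2 * sqrt ((t + x) * (t + y)) * (sqrt ((t + x) * (t + y)) + g)"
    using t x_pos y_pos g_pos by (simp add: add_pos_pos)
  then have "0 \<le> t\<^sup>2 * (a - g) / (g\<^sup>2 * sqrt ((t + x) * (t + y)) * (sqrt ((t + x) * (t + y)) + g))"
    and "x \<noteq> y \<Longrightarrow> 0 < t\<^sup>2 * (a - g) / (g\<^sup>2 * sqrt ((t + x) * (t + y)) * (sqrt ((t + x) * (t + y)) + g))"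
    using t g_le_a g_less_a_iff by simp_all
  with defect_gap_ge[OF t] show "defect t \<le> a / g * defect0 t" "x \<noteq> y \<Longrightarrow> defect t < a / g * defect0 t"
    by linarith+
qed

lemma defect_eq_defect0:
  assumes "x = y" "0 \<le> t"
  shows "defect t = defect0 t"
proof -
  have "g = x" "sqrt ((t + x) * (t + y)) = t + x"
    unfolding g_def using assms x_pos by simp_all
  then show ?thesis
    unfolding defect_def defect0_def using assms x_pos by (simp add: divide_simps)
qed

lemma continuous_on_defect: "continuous_on {0<..} defect"
  unfolding defect_def using x_pos y_pos by (intro continuous_intros) auto

lemma continuous_on_defect0: "continuous_on {0<..} defect0"
  unfolding defect0_def using g_pos by (intro continuous_intros) auto

lemma integral_weighted_defect_bounds:
  assumes int: "(\<lambda>t. w t * defect t) integrable_on {0<..}" "(\<lambda>t. w t * defect0 t) integrable_on {0<..}"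
    and w: "\<And>t. 0 < t \<Longrightarrow> 0 \<le> w t"
  shows "integral {0<..} (\<lambda>t. w t * defect0 t) \<le> integral {0<..} (\<lambda>t. w t * defect t)"
    and "integral {0<..} (\<lambda>t. w t * defect t) \<le> a / g * integral {0<..} (\<lambda>t. w t * defect0 t)"
proof -
  show "integral {0<..} (\<lambda>t. w t * defect0 t) \<le> integral {0<..} (\<lambda>t. w t * defect t)"
    using int w defect0_le_defect(1) by (intro integral_le) (auto intro: mult_left_mono)
  have "integral {0<..} (\<lambda>t. w t * defect t) \<le> integral {0<..} (\<lambda>t. a / g * (w t * defect0 t))"
  proof (rule integral_le[OF int(1) integrable_on_mult_right[OF int(2)]])
    fix t :: real assume "t \<in> {0<..}"
    then show "w t * defect t \<le> a / g * (w t * defect0 t)"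
      using mult_left_mono[OF defect_le_defect0(1) w] by (simp add: mult_ac)
  qed
  then show "integral {0<..} (\<lambda>t. w t * defect t) \<le> a / g * integral {0<..} (\<lambda>t. w t * defect0 t)"
    by simp
qed

lemma integral_weighted_defect_strict_bounds:
  assumes int: "(\<lambda>t. w t * defect t) integrable_on {0<..}" "(\<lambda>t. w t * defect0 t) integrable_on {0<..}"
    and w: "continuous_on {0<..} w" "\<And>t. 0 < t \<Longrightarrow> 0 < w t" and "x \<noteq> y"
  shows "integral {0<..} (\<lambda>t. w t * defect0 t) < integral {0<..} (\<lambda>t. w t * defect t)"
    and "integral {0<..} (\<lambda>t. w t * defect t) < a / g * integral {0<..} (\<lambda>t. w t * defect0 t)"
proof -
  have cont: "continuous_on {0<..} (\<lambda>t. w t * defect t)" "continuous_on {0<..} (\<lambda>t. w t * defect0 t)"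
    using w continuous_on_defect continuous_on_defect0 by (auto intro: continuous_intros)
  show "integral {0<..} (\<lambda>t. w t * defect0 t) < integral {0<..} (\<lambda>t. w t * defect t)"
  proof (rule integral_strict_mono_open[OF _ _ int(2,1) cont(2,1)])
    fix t :: real assume "t \<in> {0<..}"
    then show "w t * defect0 t < w t * defect t"
      using mult_strict_left_mono[OF defect0_le_defect(2) w(2)] \<open>x \<noteq> y\<close> by simp
  qed auto
  have "integral {0<..} (\<lambda>t. w t * defect t) < integral {0<..} (\<lambda>t. a / g * (w t * defect0 t))"
  proof (rule integral_strict_mono_open[OF _ _ int(1) integrable_on_mult_right[OF int(2)] cont(1)])
    show "continuous_on {0<..} (\<lambda>t. a / g * (w t * defect0 t))"
      using w(1) continuous_on_defect0 by (intro continuous_intros)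
    fix t :: real assume "t \<in> {0<..}"
    then show "w t * defect t < a / g * (w t * defect0 t)"
      using mult_strict_left_mono[OF defect_le_defect0(2) w(2)] \<open>x \<noteq> y\<close> by (simp add: mult_ac)
  qed auto
  then show "integral {0<..} (\<lambda>t. w t * defect t) < a / g * integral {0<..} (\<lambda>t. w t * defect0 t)"
    by simp
qed

lemma defect_div_sqrt_tendsto_0: "((\<lambda>t. defect t / sqrt t) \<longlongrightarrow> 0) (at_right 0)"
proof -
  have bounds: "0 \<le> defect t / sqrt t \<and> defect t / sqrt t \<le> a / g * (sqrt t / (g * (t + g)))"
    if t: "0 < t" for t
  proof
    show "0 \<le> defect t / sqrt t"
      using defect_nonneg[OF t] t by simp
    have "defect t / sqrt t \<le> a / g * defect0 t / sqrt t"
      using defect_le_defect0(1)[OF t] by (rule divide_right_mono) (use t in simp)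
    also have "\<dots> = a / g * (sqrt t / (g * (t + g)))"
      using t g_pos by (simp add: defect0_def divide_simps)
    finally show "defect t / sqrt t \<le> a / g * (sqrt t / (g * (t + g)))" .
  qed
  have "((\<lambda>t. a / g * (sqrt t / (g * (t + g)))) \<longlongrightarrow> a / g * (sqrt 0 / (g * (0 + g)))) (at_right 0)"
    using g_pos by (intro tendsto_intros) auto
  then have lim: "((\<lambda>t. a / g * (sqrt t / (g * (t + g)))) \<longlongrightarrow> 0) (at_right 0)"
    by simp
  have lower: "\<forall>\<^sub>F t in at_right 0. 0 \<le> defect t / sqrt t"
    using eventually_at_right_less[of 0] by (rule eventually_mono) (use bounds in blast)
  have upper: "\<forall>\<^sub>F t in at_right 0. defect t / sqrt t \<le> a / g * (sqrt t / (g * (t + g)))"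
    using eventually_at_right_less[of 0] by (rule eventually_mono) (use bounds in blast)
  show ?thesis
    by (rule tendsto_sandwich[OF lower upper tendsto_const lim])
qed

lemma absolutely_integrable_defect_div:
  "(\<lambda>t. defect t / (t * sqrt t)) absolutely_integrable_on {0<..}"
proof (rule absolutely_integrable_on_dominated)
  show "{0::real<..} \<in> sets lebesgue"
    by simp
  show "continuous_on {0<..} (\<lambda>t. defect t / (t * sqrt t))"
    using continuous_on_defect by (intro continuous_intros) auto
  show "(\<lambda>t. a / g * (1 / g * (1 / (sqrt t * (t + g))))) integrable_on {0<..}"
    using has_integral_mult_right[OF has_integral_mult_right[OF has_integral_inverse_sqrt_mult_shift[OF g_pos]]]
    by blast
  fix t :: real assume "t \<in> {0<..}"
  then have t: "0 < t"
    by simp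
  have "0 \<le> defect t"
    by (rule defect_nonneg[OF t])
  moreover have "defect t / (t * sqrt t) \<le> a / g * defect0 t / (t * sqrt t)"
    using defect_le_defect0(1)[OF t] by (rule divide_right_mono) (use t in simp)
  moreover have "a / g * defect0 t / (t * sqrt t) = a / g * (1 / g * (1 / (sqrt t * (t + g))))"
    using t g_pos by (simp add: defect0_def divide_simps)
  ultimately show "\<bar>defect t / (t * sqrt t)\<bar> \<le> a / g * (1 / g * (1 / (sqrt t * (t + g))))"
    using t by simp
qed

lemma absolutely_integrable_R_G_integrand:
  "(\<lambda>t. (x / (t + x) + y / (t + y)) * sqrt t / sqrt ((t + x) * (t + y))) absolutely_integrable_on {0<..}"
proof (rule absolutely_integrable_on_dominated)
  show "{0::real<..} \<in> sets lebesgue"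
    by simp
  show "continuous_on {0<..} (\<lambda>t. (x / (t + x) + y / (t + y)) * sqrt t / sqrt ((t + x) * (t + y)))"
    using x_pos y_pos by (intro continuous_intros) auto
  show "(\<lambda>t. x * (sqrt t / ((t + x) * (t + g))) + y * (sqrt t / ((t + y) * (t + g)))) integrable_on {0<..}"
    using has_integral_add[OF has_integral_mult_right[OF has_integral_sqrt_div_shift_mult[OF x_pos g_pos]]
        has_integral_mult_right[OF has_integral_sqrt_div_shift_mult[OF y_pos g_pos]]]
    by blast
  fix t :: real assume "t \<in> {0<..}"
  then have t: "0 < t"
    by simp
  have le: "t + g \<le> sqrt ((t + x) * (t + y))" and pos: "0 < t + g"
    using g_le_sqrt_shift[of t] t g_pos by simp_all
  then have "sqrt t / sqrt ((t + x) * (t + y)) \<le> sqrt t / (t + g)"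
    using t x_pos y_pos by (intro divide_left_mono mult_pos_pos) auto
  then have "(x / (t + x) + y / (t + y)) * (sqrt t / sqrt ((t + x) * (t + y)))
      \<le> (x / (t + x) + y / (t + y)) * (sqrt t / (t + g))"
    using t x_pos y_pos by (intro mult_left_mono) auto
  then show "\<bar>(x / (t + x) + y / (t + y)) * sqrt t / sqrt ((t + x) * (t + y))\<bar>
      \<le> x * (sqrt t / ((t + x) * (t + g))) + y * (sqrt t / ((t + y) * (t + g)))"
    using t x_pos y_pos by (simp add: algebra_simps)
qed

lemma R_G_antiderivative:
  assumes t: "0 < t"
  shows "((\<lambda>t. 2 * x * y * (defect t / sqrt t) - 2 * (x + y) * (sqrt t / sqrt ((t + x) * (t + y))))
    has_real_derivative (x / (t + x) + y / (t + y)) * sqrt t / sqrt ((t + x) * (t + y))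
      - x * y * (defect t / (t * sqrt t))) (at t)"
proof -
  have "0 < (t + x) * (t + y)"
    using t x_pos y_pos by simp
  note facts = t x_pos y_pos g_pos this
  show ?thesis
    unfolding defect_def
    by (insert facts, (rule derivative_eq_intros refl | simp)+)
      (simp add: divide_simps, simp add: algebra_simps sqrt_mult_sqrt_mult)
qed

lemma R_G_integration_by_parts:
  "((\<lambda>t. (x / (t + x) + y / (t + y)) * sqrt t / sqrt ((t + x) * (t + y)) - x * y * (defect t / (t * sqrt t)))
    has_integral 0) {0<..}"
proof -
  define F where "F t = 2 * x * y * (defect t / sqrt t) - 2 * (x + y) * (sqrt t / sqrt ((t + x) * (t + y)))"
    for t
  have "((\<lambda>t. (x / (t + x) + y / (t + y)) * sqrt t / sqrt ((t + x) * (t + y)) - x * y * (defect t / (t * sqrt t)))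
      has_integral (0 - 0)) {0<..}"
  proof (rule has_integral_Ioi_FTC[where F = F])
    show "(F has_real_derivative (x / (t + x) + y / (t + y)) * sqrt t / sqrt ((t + x) * (t + y))
        - x * y * (defect t / (t * sqrt t))) (at t)" if "0 < t" for t
      unfolding F_def by (rule R_G_antiderivative[OF that])
    show "continuous_on {0<..} (\<lambda>t. (x / (t + x) + y / (t + y)) * sqrt t / sqrt ((t + x) * (t + y))
        - x * y * (defect t / (t * sqrt t)))"
      using x_pos y_pos continuous_on_defect by (intro continuous_intros) auto
    show "(\<lambda>t. (x / (t + x) + y / (t + y)) * sqrt t / sqrt ((t + x) * (t + y))
        - x * y * (defect t / (t * sqrt t))) absolutely_integrable_on {0<..}"
      using absolutely_integrable_R_G_integrand absolutely_integrable_defect_div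
      by (intro set_integral_diff(1) set_integrable_mult_right)
    have "((\<lambda>t. sqrt t / sqrt ((t + x) * (t + y))) \<longlongrightarrow> 0) (at_right 0)"
      using x_pos y_pos by real_asymp
    from tendsto_diff[OF tendsto_mult_right_zero[OF defect_div_sqrt_tendsto_0] tendsto_mult_right_zero[OF this]]
    show "(F \<longlongrightarrow> 0) (at_right 0)"
      unfolding F_def by simp
    have "((\<lambda>t. defect t / sqrt t) \<longlongrightarrow> 0) at_top"
      unfolding defect_def using x_pos y_pos by real_asymp
    moreover have "((\<lambda>t. sqrt t / sqrt ((t + x) * (t + y))) \<longlongrightarrow> 0) at_top"
      using x_pos y_pos by real_asymp
    ultimately have "((\<lambda>t. 2 * x * y * (defect t / sqrt t) - 2 * (x + y) * (sqrt t / sqrt ((t + x) * (t + y))))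
        \<longlongrightarrow> 0 - 0) at_top"
      by (intro tendsto_diff tendsto_mult_right_zero)
    then show "(F \<longlongrightarrow> 0) at_top"
      unfolding F_def by simp
  qed
  then show ?thesis
    by simp
qed

lemma R_G_0_eq_integral:
  "R_G x y 0 = 1 / 4 * integral {0<..} (\<lambda>t. (x / (t + x) + y / (t + y)) * sqrt t / sqrt ((t + x) * (t + y)))"
proof -
  have "integral {0<..} (\<lambda>t. (x / (t + x) + y / (t + y) + 0 / (t + 0)) * t / sqrt ((t + x) * (t + y) * (t + 0)))
      = integral {0<..} (\<lambda>t. (x / (t + x) + y / (t + y)) * sqrt t / sqrt ((t + x) * (t + y)))"
  proof (rule integral_cong)
    fix t :: real assume "t \<in> {0<..}"
    then show "(x / (t + x) + y / (t + y) + 0 / (t + 0)) * t / sqrt ((t + x) * (t + y) * (t + 0))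
        = (x / (t + x) + y / (t + y)) * sqrt t / sqrt ((t + x) * (t + y))"
      using x_pos y_pos by (simp add: real_sqrt_mult divide_simps)
  qed
  then show ?thesis
    by (simp add: R_G_def integral_atLeast_eq_greaterThan)
qed

lemma R_G_0_eq_integral_defect:
  "R_G x y 0 = x * y / 4 * integral {0<..} (\<lambda>t. defect t / (t * sqrt t))"
proof -
  have int: "(\<lambda>t. (x / (t + x) + y / (t + y)) * sqrt t / sqrt ((t + x) * (t + y))) integrable_on {0<..}"
    "(\<lambda>t. defect t / (t * sqrt t)) integrable_on {0<..}"
    using absolutely_integrable_R_G_integrand absolutely_integrable_defect_div
    by (simp_all add: set_lebesgue_integral_eq_integral(1))
  have "0 = integral {0<..} (\<lambda>t. (x / (t + x) + y / (t + y)) * sqrt t / sqrt ((t + x) * (t + y))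
      - x * y * (defect t / (t * sqrt t)))"
    by (rule integral_unique[symmetric, OF R_G_integration_by_parts])
  also have "\<dots> = integral {0<..} (\<lambda>t. (x / (t + x) + y / (t + y)) * sqrt t / sqrt ((t + x) * (t + y)))
      - integral {0<..} (\<lambda>t. x * y * (defect t / (t * sqrt t)))"
    by (rule integral_diff[OF int(1) integrable_on_mult_right[OF int(2)]])
  also have "integral {0<..} (\<lambda>t. x * y * (defect t / (t * sqrt t)))
      = x * y * integral {0<..} (\<lambda>t. defect t / (t * sqrt t))"
    by (rule integral_mult_right)
  finally show ?thesis
    unfolding R_G_0_eq_integral by simp
qed

end

section \<open>The integrand of \<open>R_C\<close>\<close>

locale carlson_kernel =
  fixes z p :: real
  assumes z_nonneg: "0 \<le> z" and p_pos: "0 < p"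
begin

definition kernel :: "real \<Rightarrow> real" where
  "kernel t = 1 / (sqrt (t + z) * (t + p))"

lemma kernel_pos: "0 < t \<Longrightarrow> 0 < kernel t"
  using z_nonneg p_pos by (simp add: kernel_def add_pos_nonneg)

lemma continuous_on_kernel: "continuous_on {0<..} kernel"
  unfolding kernel_def using z_nonneg p_pos by (intro continuous_intros) auto

lemma kernel_has_integral: "(kernel has_integral 2 * R_C z p) {0<..}"
  unfolding kernel_def[abs_def] using R_C_has_integral[OF z_nonneg p_pos] .

lemma inverse_sqrt_minus_kernel_gt:
  assumes t: "0 < t"
  defines "b \<equiv> sqrt (3 * p * (p + 2 * z)) / 2"
  shows "b / (sqrt t * (t + b)) < 1 / sqrt t - t * kernel t"
proof -
  have b: "0 \<le> b"
    using z_nonneg p_pos by (simp add: b_def)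
  have "t / (sqrt (t + z) * (t + p)) < t / (sqrt t * (t + b))"
    using sqrt_shift_estimate_b[OF t z_nonneg p_pos] t b z_nonneg p_pos
    by (intro divide_strict_left_mono) (auto simp: b_def add_pos_nonneg)
  also have "\<dots> = 1 / sqrt t - b / (sqrt t * (t + b))"
    using t b by (simp add: divide_simps)
  finally show ?thesis
    by (simp add: kernel_def)
qed

lemma inverse_sqrt_minus_kernel_lt:
  assumes t: "0 < t"
  defines "d \<equiv> (z + 2 * p) / 3"
  shows "1 / sqrt t - t * kernel t < 3 * d / (2 * sqrt t * (t + d))"
proof -
  define w where "w = sqrt t"
  define r where "r = sqrt (t + z)"
  have pos: "0 < w" "0 < r" "0 < t + p" "0 < d"
    using t z_nonneg p_pos by (simp_all add: w_def r_def d_def)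
  have "1 / w - t / (r * (t + p)) - 3 * d / (2 * w * (t + d))
      = ((2 * t - d) * r * (t + p) - 2 * t * w * (t + d)) / (2 * w * r * (t + p) * (t + d))"
    using pos t by (simp add: divide_simps) (simp add: algebra_simps)
  also have "\<dots> < 0"
    using sqrt_shift_estimate_d[OF t z_nonneg p_pos, folded w_def r_def d_def] pos t
    by (intro divide_neg_pos) auto
  finally show ?thesis
    by (simp add: w_def r_def kernel_def)
qed

text \<open>\<open>1 / (t * sqrt t)\<close> is the kernel for \<open>z = p = 0\<close>.\<close>
definition kernel_gap :: "real \<Rightarrow> real" where
  "kernel_gap t = 1 / (t * sqrt t) - kernel t"

lemma kernel_gap_nonneg:
  assumes t: "0 < t"
  shows "0 \<le> kernel_gap t"
proof -
  have "sqrt t * t \<le> sqrt (t + z) * (t + p)"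
    using t z_nonneg p_pos by (intro mult_mono) auto
  then have "kernel t \<le> 1 / (t * sqrt t)"
    unfolding kernel_def using t z_nonneg p_pos
    by (intro divide_left_mono) (auto simp: mult.commute add_pos_nonneg)
  then show ?thesis
    by (simp add: kernel_gap_def)
qed

lemma continuous_on_kernel_gap: "continuous_on {0<..} kernel_gap"
  unfolding kernel_gap_def using continuous_on_kernel by (intro continuous_intros) auto

end

section \<open>The integral \<open>R_J\<close>\<close>

locale carlson_RJ = carlson_pair + carlson_kernel
begin

lemma integrable_kernel_mult_bounded:
  assumes "continuous_on {0<..} f" "\<And>t. 0 < t \<Longrightarrow> \<bar>f t\<bar> \<le> 1 / g"
  shows "(\<lambda>t. kernel t * f t) integrable_on {0<..}"
proof -
  have "(\<lambda>t. kernel t * f t) absolutely_integrable_on {0<..}"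
  proof (rule absolutely_integrable_on_dominated)
    show "{0::real<..} \<in> sets lebesgue"
      by simp
    show "continuous_on {0<..} (\<lambda>t. kernel t * f t)"
      using continuous_on_kernel assms(1) by (intro continuous_intros)
    show "(\<lambda>t. 1 / g * kernel t) integrable_on {0<..}"
      using has_integral_mult_right[OF kernel_has_integral] by blast
    fix t :: real assume "t \<in> {0<..}"
    then have t: "0 < t"
      by simp
    have "\<bar>kernel t * f t\<bar> = kernel t * \<bar>f t\<bar>"
      using kernel_pos[OF t] by (simp add: abs_mult)
    also have "\<dots> \<le> kernel t * (1 / g)"
      using assms(2)[OF t] kernel_pos[OF t] by (intro mult_left_mono) auto
    finally show "\<bar>kernel t * f t\<bar> \<le> 1 / g * kernel t"
      by simp
  qed
  then show ?thesis
    by (rule set_lebesgue_integral_eq_integral(1))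
qed

lemma integrable_kernel_defect0: "(\<lambda>t. kernel t * defect0 t) integrable_on {0<..}"
proof (rule integrable_kernel_mult_bounded[OF continuous_on_defect0])
  fix t :: real assume t: "0 < t"
  then show "\<bar>defect0 t\<bar> \<le> 1 / g"
    using g_pos defect0_pos[OF t] by (simp add: defect0_def divide_simps)
qed

lemma integrable_kernel_defect: "(\<lambda>t. kernel t * defect t) integrable_on {0<..}"
proof (rule integrable_kernel_mult_bounded[OF continuous_on_defect])
  fix t :: real assume t: "0 < t"
  have "0 < sqrt ((t + x) * (t + y))"
    using t x_pos y_pos by simp
  moreover have "0 \<le> defect t"
    by (rule defect_nonneg[OF t])
  ultimately show "\<bar>defect t\<bar> \<le> 1 / g"
    by (simp add: defect_def)
qed

lemma R_J_eq_integral_kernel_defect: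
  "R_J x y z p = 3 / g * R_C z p - 3 / 2 * integral {0<..} (\<lambda>t. kernel t * defect t)"
proof -
  have "integral {0<..} (\<lambda>t. 1 / (sqrt ((t + x) * (t + y) * (t + z)) * (t + p)))
      = integral {0<..} (\<lambda>t. 1 / g * kernel t - kernel t * defect t)"
  proof (rule integral_cong)
    fix t :: real assume "t \<in> {0<..}"
    then have "1 / (sqrt ((t + x) * (t + y) * (t + z)) * (t + p)) = kernel t / sqrt ((t + x) * (t + y))"
      using x_pos y_pos z_nonneg by (simp add: kernel_def real_sqrt_mult)
    also have "\<dots> = 1 / g * kernel t - kernel t * defect t"
      by (simp add: defect_def algebra_simps)
    finally show "1 / (sqrt ((t + x) * (t + y) * (t + z)) * (t + p)) = 1 / g * kernel t - kernel t * defect t" .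
  qed
  also have "\<dots> = 1 / g * (2 * R_C z p) - integral {0<..} (\<lambda>t. kernel t * defect t)"
  proof -
    have "((\<lambda>t. 1 / g * kernel t) has_integral 1 / g * (2 * R_C z p)) {0<..}"
      by (rule has_integral_mult_right[OF kernel_has_integral])
    moreover from this have "integral {0<..} (\<lambda>t. 1 / g * kernel t - kernel t * defect t)
        = integral {0<..} (\<lambda>t. 1 / g * kernel t) - integral {0<..} (\<lambda>t. kernel t * defect t)"
      by (intro integral_diff has_integral_integrable integrable_kernel_defect)
    ultimately show ?thesis
      using integral_unique by metis
  qed
  finally show ?thesis
    by (simp add: R_J_def integral_atLeast_eq_greaterThan)
qed

lemma integral_kernel_defect0_pos: "0 < integral {0<..} (\<lambda>t. kernel t * defect0 t)"
proof -
  have "integral {0<..} (\<lambda>t::real. 0) < integral {0<..} (\<lambda>t. kernel t * defect0 t)"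
    by (rule integral_strict_mono_open) (use integrable_kernel_defect0 continuous_on_kernel
        continuous_on_defect0 kernel_pos defect0_pos integrable_0 in \<open>auto intro!: continuous_intros\<close>)
  then show ?thesis
    by simp
qed

lemma integral_kernel_defect_eq_mult:
  "\<exists>\<theta>. 1 \<le> \<theta> \<and> \<theta> \<le> a / g \<and> (\<theta> = 1 \<longleftrightarrow> x = y) \<and> (\<theta> = a / g \<longleftrightarrow> x = y)
     \<and> integral {0<..} (\<lambda>t. kernel t * defect t) = \<theta> * integral {0<..} (\<lambda>t. kernel t * defect0 t)"
proof -
  define I where "I = integral {0<..} (\<lambda>t. kernel t * defect t)"
  define I0 where "I0 = integral {0<..} (\<lambda>t. kernel t * defect0 t)"
  have I0_pos: "0 < I0"
    unfolding I0_def by (rule integral_kernel_defect0_pos)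
  have "I0 \<le> I" "I \<le> a / g * I0"
    unfolding I_def I0_def
    using integral_weighted_defect_bounds[OF integrable_kernel_defect integrable_kernel_defect0] kernel_pos
    by (auto intro: less_imp_le)
  moreover have "I0 < I \<and> I < a / g * I0" if "x \<noteq> y"
    unfolding I_def I0_def
    using integral_weighted_defect_strict_bounds[OF integrable_kernel_defect integrable_kernel_defect0
        continuous_on_kernel kernel_pos that] by blast
  moreover have "I = I0 \<and> a = g" if "x = y"
  proof
    show "I = I0"
      unfolding I_def I0_def using defect_eq_defect0[OF that] by (intro integral_cong) simp
    show "a = g"
      using g_less_a_iff g_le_a that by simp
  qed
  ultimately have "1 \<le> I / I0 \<and> I / I0 \<le> a / g \<and> (I / I0 = 1 \<longleftrightarrow> x = y) \<and> (I / I0 = a / g \<longleftrightarrow> x = y)"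
    using I0_pos g_pos by (cases "x = y") (auto simp: field_simps)
  moreover have "I = I / I0 * I0"
    using I0_pos by simp
  ultimately show ?thesis
    unfolding I_def I0_def by blast
qed

lemma integral_kernel_defect0_eq_R_C:
  assumes "g \<noteq> p"
  shows "integral {0<..} (\<lambda>t. kernel t * defect0 t) = 2 / (g - p) * (R_C z g - p / g * R_C z p)"
proof -
  have int: "((\<lambda>t. 1 / (g - p) * (1 / (sqrt (t + z) * (t + g)) - p / g * kernel t))
      has_integral 1 / (g - p) * (2 * R_C z g - p / g * (2 * R_C z p))) {0<..}"
    by (intro has_integral_mult_right has_integral_diff R_C_has_integral kernel_has_integral z_nonneg g_pos)
  have "((\<lambda>t. kernel t * defect0 t) has_integral 1 / (g - p) * (2 * R_C z g - p / g * (2 * R_C z p))) {0<..}"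
  proof (rule has_integral_eq[OF _ int])
    fix t :: real assume "t \<in> {0<..}"
    then have "0 < sqrt (t + z)" "0 < t + g" "0 < t + p"
      using z_nonneg g_pos p_pos by (simp_all add: add_pos_nonneg)
    then show "1 / (g - p) * (1 / (sqrt (t + z) * (t + g)) - p / g * kernel t) = kernel t * defect0 t"
      using assms g_pos unfolding kernel_def defect0_def by (simp add: divide_simps) (simp add: algebra_simps)
  qed
  then show ?thesis
    by (simp add: integral_unique algebra_simps)
qed

lemma integral_kernel_defect0_complete:
  assumes "z = 0"
  shows "integral {0<..} (\<lambda>t. kernel t * defect0 t) = pi / (g * (sqrt p + sqrt g))"
proof -
  have int: "((\<lambda>t. 1 / g * (sqrt t / ((t + p) * (t + g)))) has_integral 1 / g * (pi / (sqrt p + sqrt g))) {0<..}"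
    by (intro has_integral_mult_right has_integral_sqrt_div_shift_mult p_pos g_pos)
  have "((\<lambda>t. kernel t * defect0 t) has_integral 1 / g * (pi / (sqrt p + sqrt g))) {0<..}"
  proof (rule has_integral_eq[OF _ int])
    fix t :: real assume "t \<in> {0<..}"
    then show "1 / g * (sqrt t / ((t + p) * (t + g))) = kernel t * defect0 t"
      using assms g_pos p_pos unfolding kernel_def defect0_def by (simp add: divide_simps)
  qed
  then show ?thesis
    by (simp add: integral_unique)
qed

lemma R_J_theta:
  "\<exists>\<theta>. 1 \<le> \<theta> \<and> \<theta> \<le> a / g \<and> (\<theta> = 1 \<longleftrightarrow> x = y) \<and> (\<theta> = a / g \<longleftrightarrow> x = y)
     \<and> (g \<noteq> p \<longrightarrow> R_J x y z p = 3 / g * R_C z p - 3 * \<theta> / (g - p) * (R_C z g - p / g * R_C z p))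
     \<and> (z = 0 \<longrightarrow> R_J x y 0 p = 3 * pi / (2 * (g * sqrt p)) * (1 - \<theta> * sqrt p / (sqrt g + sqrt p)))"
proof -
  define I0 where "I0 = integral {0<..} (\<lambda>t. kernel t * defect0 t)"
  obtain \<theta> where \<theta>: "1 \<le> \<theta>" "\<theta> \<le> a / g" "\<theta> = 1 \<longleftrightarrow> x = y" "\<theta> = a / g \<longleftrightarrow> x = y"
    and I: "integral {0<..} (\<lambda>t. kernel t * defect t) = \<theta> * I0"
    using integral_kernel_defect_eq_mult unfolding I0_def by blast
  have R_J: "R_J x y z p = 3 / g * R_C z p - 3 / 2 * \<theta> * I0"
    using R_J_eq_integral_kernel_defect unfolding I by simp
  have "R_J x y z p = 3 / g * R_C z p - 3 * \<theta> / (g - p) * (R_C z g - p / g * R_C z p)" if "g \<noteq> p"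
  proof -
    have I0: "I0 = 2 / (g - p) * (R_C z g - p / g * R_C z p)"
      using integral_kernel_defect0_eq_R_C[OF that] unfolding I0_def .
    show ?thesis
      unfolding R_J I0 using that g_pos by (simp add: field_simps)
  qed
  moreover have "R_J x y 0 p = 3 * pi / (2 * (g * sqrt p)) * (1 - \<theta> * sqrt p / (sqrt g + sqrt p))"
    if "z = 0"
  proof -
    have I0: "I0 = pi / (g * (sqrt p + sqrt g))"
      using integral_kernel_defect0_complete[OF that] unfolding I0_def .
    have "R_J x y 0 p = 3 / g * (pi / (2 * sqrt p)) - 3 / 2 * \<theta> * (pi / (g * (sqrt p + sqrt g)))"
      using R_J by (simp only: I0 R_C_0[OF p_pos] that)
    also have "\<dots> = 3 * pi / (2 * (g * sqrt p)) * (1 - \<theta> * sqrt p / (sqrt g + sqrt p))"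
      using g_pos p_pos by (simp add: divide_simps) (simp add: algebra_simps)
    finally show ?thesis .
  qed
  ultimately show ?thesis
    using \<theta> by blast
qed

lemma kernel_gap_mult_defect0:
  "0 < t \<Longrightarrow> kernel_gap t * defect0 t = (1 / sqrt t - t * kernel t) / (g * (t + g))"
  using g_pos by (simp add: kernel_gap_def defect0_def divide_simps)

lemma kernel_gap_mult_defect0_bounds:
  assumes t: "0 < t"
  defines "b \<equiv> sqrt (3 * p * (p + 2 * z)) / 2" and "d \<equiv> (z + 2 * p) / 3"
  shows "1 / g * (b / (sqrt t * (t + b) * (t + g))) < kernel_gap t * defect0 t"
    and "kernel_gap t * defect0 t < 3 / (2 * g) * (d / (sqrt t * (t + d) * (t + g)))"
proof -
  have pos: "0 < g * (t + g)"
    using t g_pos by simp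
  have "1 / g * (b / (sqrt t * (t + b) * (t + g))) = b / (sqrt t * (t + b)) / (g * (t + g))"
    by (simp add: field_simps)
  also have "\<dots> < (1 / sqrt t - t * kernel t) / (g * (t + g))"
    using inverse_sqrt_minus_kernel_gt[OF t] pos by (intro divide_strict_right_mono) (simp_all add: b_def)
  finally show "1 / g * (b / (sqrt t * (t + b) * (t + g))) < kernel_gap t * defect0 t"
    using kernel_gap_mult_defect0[OF t] by simp
  have "(1 / sqrt t - t * kernel t) / (g * (t + g)) < 3 * d / (2 * sqrt t * (t + d)) / (g * (t + g))"
    using inverse_sqrt_minus_kernel_lt[OF t] pos by (intro divide_strict_right_mono) (simp_all add: d_def)
  also have "\<dots> = 3 / (2 * g) * (d / (sqrt t * (t + d) * (t + g)))"
    by (simp add: field_simps)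
  finally show "kernel_gap t * defect0 t < 3 / (2 * g) * (d / (sqrt t * (t + d) * (t + g)))"
    using kernel_gap_mult_defect0[OF t] by simp
qed

lemma kernel_gap_mult_defect_has_integral:
  "((\<lambda>t. kernel_gap t * defect t) has_integral
     integral {0<..} (\<lambda>t. defect t / (t * sqrt t)) - integral {0<..} (\<lambda>t. kernel t * defect t)) {0<..}"
proof -
  have "(\<lambda>t. defect t / (t * sqrt t)) integrable_on {0<..}"
    using absolutely_integrable_defect_div by (rule set_lebesgue_integral_eq_integral(1))
  from has_integral_diff[OF integrable_integral[OF this] integrable_integral[OF integrable_kernel_defect]]
  show ?thesis
    by (simp add: kernel_gap_def algebra_simps)
qed

lemma kernel_gap_mult_defect0_has_integral:
  "((\<lambda>t. kernel_gap t * defect0 t) has_integral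
     1 / g * (pi / sqrt g) - integral {0<..} (\<lambda>t. kernel t * defect0 t)) {0<..}"
proof -
  have int: "((\<lambda>t. 1 / g * (1 / (sqrt t * (t + g))) - kernel t * defect0 t) has_integral
      1 / g * (pi / sqrt g) - integral {0<..} (\<lambda>t. kernel t * defect0 t)) {0<..}"
    by (intro has_integral_diff has_integral_mult_right has_integral_inverse_sqrt_mult_shift g_pos
        integrable_integral integrable_kernel_defect0)
  show ?thesis
  proof (rule has_integral_eq[OF _ int])
    fix t :: real assume "t \<in> {0<..}"
    then show "1 / g * (1 / (sqrt t * (t + g))) - kernel t * defect0 t = kernel_gap t * defect0 t"
      using g_pos by (simp add: kernel_gap_def defect0_def divide_simps)
  qed
qed

lemma integral_kernel_gap_mult_defect0_bounds:
  defines "b \<equiv> sqrt (3 * p * (p + 2 * z)) / 2" and "d \<equiv> (z + 2 * p) / 3"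
  shows "pi / g\<^sup>2 * (sqrt b / (1 + sqrt (b / g))) < integral {0<..} (\<lambda>t. kernel_gap t * defect0 t)"
    and "integral {0<..} (\<lambda>t. kernel_gap t * defect0 t) < 3 / (2 * g) * (pi / g * (sqrt d / (1 + sqrt (d / g))))"
proof -
  have b: "0 < b" and d: "0 < d"
    using p_pos z_nonneg by (simp_all add: b_def d_def)
  have int: "(\<lambda>t. kernel_gap t * defect0 t) integrable_on {0<..}"
    using kernel_gap_mult_defect0_has_integral by blast
  have cont: "continuous_on {0<..} (\<lambda>t. kernel_gap t * defect0 t)"
    using continuous_on_kernel_gap continuous_on_defect0 by (intro continuous_intros)
  have lower: "((\<lambda>t. 1 / g * (b / (sqrt t * (t + b) * (t + g)))) has_integral
      pi / g\<^sup>2 * (sqrt b / (1 + sqrt (b / g)))) {0<..}"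
    using has_integral_mult_right[OF has_integral_inverse_sqrt_mult_shifts[OF b g_pos], of "1 / g"]
    by (simp add: power2_eq_square mult.assoc)
  have upper: "((\<lambda>t. 3 / (2 * g) * (d / (sqrt t * (t + d) * (t + g)))) has_integral
      3 / (2 * g) * (pi / g * (sqrt d / (1 + sqrt (d / g))))) {0<..}"
    by (rule has_integral_mult_right[OF has_integral_inverse_sqrt_mult_shifts[OF d g_pos]])
  have "integral {0<..} (\<lambda>t. 1 / g * (b / (sqrt t * (t + b) * (t + g))))
      < integral {0<..} (\<lambda>t. kernel_gap t * defect0 t)"
    by (rule integral_strict_mono_open[OF _ _ has_integral_integrable[OF lower] int _ cont])
      (use g_pos b kernel_gap_mult_defect0_bounds(1)[unfolded b_def[symmetric]]
        in \<open>auto intro!: continuous_intros\<close>)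
  then show "pi / g\<^sup>2 * (sqrt b / (1 + sqrt (b / g))) < integral {0<..} (\<lambda>t. kernel_gap t * defect0 t)"
    unfolding integral_unique[OF lower] .
  have "integral {0<..} (\<lambda>t. kernel_gap t * defect0 t)
      < integral {0<..} (\<lambda>t. 3 / (2 * g) * (d / (sqrt t * (t + d) * (t + g))))"
    by (rule integral_strict_mono_open[OF _ _ int has_integral_integrable[OF upper] cont])
      (use g_pos d kernel_gap_mult_defect0_bounds(2)[unfolded d_def[symmetric]]
        in \<open>auto intro!: continuous_intros\<close>)
  then show "integral {0<..} (\<lambda>t. kernel_gap t * defect0 t) < 3 / (2 * g) * (pi / g * (sqrt d / (1 + sqrt (d / g))))"
    unfolding integral_unique[OF upper] .
qed

lemma integral_kernel_gap_mult_defect_eq_mult: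
  defines "b \<equiv> sqrt (3 * p * (p + 2 * z)) / 2" and "d \<equiv> (z + 2 * p) / 3"
  shows "\<exists>\<theta>'. sqrt b / (1 + sqrt (b / g)) < \<theta>' \<and> \<theta>' < 3 * a / (2 * g) * (sqrt d / (1 + sqrt (d / g)))
     \<and> integral {0<..} (\<lambda>t. kernel_gap t * defect t) = pi / (x * y) * \<theta>'"
proof -
  define M where "M = integral {0<..} (\<lambda>t. kernel_gap t * defect t)"
  define M0 where "M0 = integral {0<..} (\<lambda>t. kernel_gap t * defect0 t)"
  have "M0 \<le> M" and le_M0: "M \<le> a / g * M0"
    unfolding M_def M0_def
    using integral_weighted_defect_bounds[OF has_integral_integrable[OF kernel_gap_mult_defect_has_integral]
        has_integral_integrable[OF kernel_gap_mult_defect0_has_integral]] kernel_gap_nonneg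
    by auto
  have lower: "pi / g\<^sup>2 * (sqrt b / (1 + sqrt (b / g))) < M0"
    and upper: "M0 < 3 / (2 * g) * (pi / g * (sqrt d / (1 + sqrt (d / g))))"
    using integral_kernel_gap_mult_defect0_bounds by (simp_all add: M0_def b_def d_def)
  have c: "0 < g\<^sup>2 / pi" and ag: "0 < a / g"
    using g_pos g_le_a by auto
  have "sqrt b / (1 + sqrt (b / g)) = g\<^sup>2 / pi * (pi / g\<^sup>2 * (sqrt b / (1 + sqrt (b / g))))"
    using g_pos by simp
  also have "\<dots> < g\<^sup>2 / pi * M0"
    using lower c by (rule mult_strict_left_mono)
  also have "\<dots> \<le> g\<^sup>2 / pi * M"
    using \<open>M0 \<le> M\<close> c by (intro mult_left_mono) auto
  finally have lo: "sqrt b / (1 + sqrt (b / g)) < g\<^sup>2 / pi * M" .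
  have "g\<^sup>2 / pi * M \<le> g\<^sup>2 / pi * (a / g * M0)"
    using le_M0 c by (intro mult_left_mono) auto
  also have "\<dots> < g\<^sup>2 / pi * (a / g * (3 / (2 * g) * (pi / g * (sqrt d / (1 + sqrt (d / g))))))"
    using upper c ag by (intro mult_strict_left_mono) auto
  also have "\<dots> = 3 * a / (2 * g) * (sqrt d / (1 + sqrt (d / g)))"
  proof -
    have "g\<^sup>2 / pi * (a / g * (3 / (2 * g) * (pi / g * S))) = 3 * a / (2 * g) * S" for S
      using g_pos by (simp add: field_simps power2_eq_square)
    then show ?thesis .
  qed
  finally have hi: "g\<^sup>2 / pi * M < 3 * a / (2 * g) * (sqrt d / (1 + sqrt (d / g)))" .
  have "M = pi / (x * y) * (g\<^sup>2 / pi * M)"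
    using g_sq x_pos y_pos by simp
  with lo hi show ?thesis
    unfolding M_def by blast
qed

lemma R_J_theta':
  defines "b \<equiv> sqrt (3 * p * (p + 2 * z)) / 2" and "d \<equiv> (z + 2 * p) / 3"
  shows "\<exists>\<theta>'. sqrt b / (1 + sqrt (b / g)) < \<theta>' \<and> \<theta>' < 3 * a / (2 * g) * (sqrt d / (1 + sqrt (d / g)))
     \<and> R_J x y z p = 3 / g * R_C z p - 6 / (x * y) * R_G x y 0 + 3 * pi * \<theta>' / (2 * x * y)"
proof -
  define T where "T = integral {0<..} (\<lambda>t. defect t / (t * sqrt t))"
  define I where "I = integral {0<..} (\<lambda>t. kernel t * defect t)"
  obtain \<theta>' where \<theta>': "sqrt b / (1 + sqrt (b / g)) < \<theta>'" "\<theta>' < 3 * a / (2 * g) * (sqrt d / (1 + sqrt (d / g)))"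
    and "integral {0<..} (\<lambda>t. kernel_gap t * defect t) = pi / (x * y) * \<theta>'"
    using integral_kernel_gap_mult_defect_eq_mult unfolding b_def d_def by blast
  then have "3 * pi * \<theta>' / (2 * x * y) = 3 / 2 * (T - I)"
    using integral_unique[OF kernel_gap_mult_defect_has_integral] x_pos y_pos
    unfolding T_def[symmetric] I_def[symmetric] by simp
  moreover have "6 / (x * y) * R_G x y 0 = 3 / 2 * T"
    unfolding R_G_0_eq_integral_defect T_def[symmetric] using x_pos y_pos by simp
  ultimately have "R_J x y z p = 3 / g * R_C z p - 6 / (x * y) * R_G x y 0 + 3 * pi * \<theta>' / (2 * x * y)"
    using R_J_eq_integral_kernel_defect unfolding I_def[symmetric] by simp
  with \<theta>' show ?thesis
    by blast
qed

end

theorem mainTheorem13: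
  fixes x y z p :: real
  assumes hx: "x > 0" and hy: "y > 0" and hz: "z \<ge> 0" and hp: "p > 0"
  defines "a \<equiv> (x + y) / 2"
      and "g \<equiv> sqrt (x * y)"
      and "b \<equiv> sqrt (3 * p * (p + 2 * z)) / 2"
      and "d \<equiv> (z + 2 * p) / 3"
  shows "(\<exists>\<theta>. 1 \<le> \<theta> \<and> \<theta> \<le> a / g
            \<and> (\<theta> = 1 \<longleftrightarrow> x = y) \<and> (\<theta> = a / g \<longleftrightarrow> x = y)
            \<and> (g \<noteq> p \<longrightarrow>
                 R_J x y z p = 3 / g * R_C z p
                   - 3 * \<theta> / (g - p) * (R_C z g - p / g * R_C z p))
            \<and> (z = 0 \<longrightarrow>
                 R_J x y 0 p = 3 * pi / (2 * sqrt (x * y * p))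
                   * (1 - \<theta> * sqrt p / (sqrt g + sqrt p))))
       \<and> (\<exists>\<theta>'. sqrt b / (1 + sqrt (b / g)) < \<theta>'
            \<and> \<theta>' < 3 * a / (2 * g) * (sqrt d / (1 + sqrt (d / g)))
            \<and> R_J x y z p = 3 / g * R_C z p - 6 / (x * y) * R_G x y 0
                 + 3 * pi * \<theta>' / (2 * x * y))"
proof -
  interpret C: carlson_RJ x y z p
    using hx hy hz hp by unfold_locales
  have "C.g = g" "C.a = a"
    by (simp_all add: g_def a_def C.g_def C.a_def)
  moreover have "sqrt (x * y * p) = g * sqrt p"
    by (simp add: g_def real_sqrt_mult)
  ultimately show ?thesis
    using C.R_J_theta C.R_J_theta' unfolding b_def d_def by simp
qed

end
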